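(* Let $d\ge0$ be an integer, let $\mathcal D_d$ be the class of all $d$-degenerate graphs, and let $H$ be a graph. If $H$ is not $d$-degenerate then $\mathrm{ex}(H,\mathcal D_d,n)=0$ for all $n$. If $H$ is $d$-degenerate, then there exist positive real numbers $c_1,c_2$ such that $\mathrm{ex}(H,\mathcal D_d,n)\le c_2n^{\alpha_d(H)}$ for every positive integer $n$ and $\mathrm{ex}(H,\mathcal D_d,n)\ge c_1n^{\alpha_d(H)}$ for all sufficiently large $n$.
   Context: Graphs are finite and simple. A graph is $d$-degenerate if every subgraph has minimum degree at most $d$. $\alpha_d(H)$ is the maximum size of a set of pairwise non-adjacent vertices of $H$ each of degree at most $d$ in $H$. For a class $\mathcal G$ of graphs, $\mathrm{ex}(H,\mathcal G,n)$ is the maximum number of subgraphs isomorphic to $H$ contained in an $n$-vertex graph of $\mathcal G$. *)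

theory Defs
  imports Complex_Main
begin

definition sgraph :: "'a set \<Rightarrow> 'a set set \<Rightarrow> bool" where
  "sgraph V E \<longleftrightarrow> finite V \<and> (\<forall>e\<in>E. e \<subseteq> V \<and> card e = 2)"

definition degree :: "'a set set \<Rightarrow> 'a \<Rightarrow> nat" where
  "degree E v = card {e\<in>E. v \<in> e}"

definition subgraph :: "'a set \<Rightarrow> 'a set set \<Rightarrow> 'a set \<Rightarrow> 'a set set \<Rightarrow> bool" where
  "subgraph V' E' V E \<longleftrightarrow> V' \<subseteq> V \<and> E' \<subseteq> E \<and> sgraph V' E'"

definition degenerate :: "nat \<Rightarrow> 'a set \<Rightarrow> 'a set set \<Rightarrow> bool" where
  "degenerate d V E \<longleftrightarrow>
     (\<forall>V' E'. subgraph V' E' V E \<and> V' \<noteq> {} \<longrightarrow> (\<exists>v\<in>V'. degree E' v \<le> d))"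

definition alpha_d :: "nat \<Rightarrow> 'a set \<Rightarrow> 'a set set \<Rightarrow> nat" where
  "alpha_d d V E = Max {card S | S. S \<subseteq> V \<and> (\<forall>x\<in>S. \<forall>y\<in>S. {x, y} \<notin> E)
                                    \<and> (\<forall>x\<in>S. degree E x \<le> d)}"

definition graph_iso :: "'a set \<Rightarrow> 'a set set \<Rightarrow> 'b set \<Rightarrow> 'b set set \<Rightarrow> bool" where
  "graph_iso V1 E1 V2 E2 \<longleftrightarrow>
     (\<exists>f. bij_betw f V1 V2 \<and> (\<forall>x\<in>V1. \<forall>y\<in>V1. {x, y} \<in> E1 \<longleftrightarrow> {f x, f y} \<in> E2))"

definition num_copies :: "'b set \<Rightarrow> 'b set set \<Rightarrow> 'a set \<Rightarrow> 'a set set \<Rightarrow> nat" where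
  "num_copies VH EH V E =
     card {(V', E'). subgraph V' E' V E \<and> graph_iso VH EH V' E'}"

text \<open>ex(H, D_d, n): maximum number of copies of H in an n-vertex d-degenerate graph.
  Every n-vertex graph is isomorphic to one on vertex set {..<n}, so we maximise over those.\<close>
definition ex_degen :: "'b set \<Rightarrow> 'b set set \<Rightarrow> nat \<Rightarrow> nat \<Rightarrow> nat" where
  "ex_degen VH EH d n =
     Max {num_copies VH EH {..<n} E | E :: nat set set. sgraph {..<n} E \<and> degenerate d {..<n} E}"

end

theory Submission
  imports Defs "HOL-Library.FuncSet"
begin

text \<open>If H is not d-degenerate it has no copy in a d-degenerate graph, because degeneracy passes
  to subgraphs and is invariant under isomorphism.

  Otherwise, order a d-degenerate host graph G on n vertices so that every vertex has at most d
  later neighbours. In a copy of H, the vertices without earlier neighbour are pairwise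
  non-adjacent and have degree at most d in H, so there are at most alpha_d(H) of them; every other
  vertex of the copy is reached from one of them by a walk through later neighbours, each step
  choosing one of at most d vertices. A copy is therefore determined by the positions of at most
  alpha_d(H) vertices and a bounded amount of further data, which gives O(n^alpha_d(H)) copies.

  Conversely, blowing up every vertex of a largest independent set S of vertices of degree at
  most d into m twins keeps the graph d-degenerate (the twins still have degree at most d, and
  without them what remains is H) and produces m^|S| copies of H on at most |V(H)| m vertices.\<close>

definition neighbours :: "'a set set \<Rightarrow> 'a \<Rightarrow> 'a set" where
  "neighbours E v = {u. {v, u} \<in> E}"

lemma sgraph_edgeE:
  assumes "sgraph V E" "e \<in> E"
  obtains x y where "e = {x, y}" "x \<noteq> y" "x \<in> V" "y \<in> V"
  using assms unfolding sgraph_def by (metis card_2_iff insert_subset)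

lemma sgraph_edges_subset_Pow: "sgraph V E \<Longrightarrow> E \<subseteq> Pow V"
  unfolding sgraph_def by auto

lemma sgraph_finite_edges: "sgraph V E \<Longrightarrow> finite E"
  using sgraph_edges_subset_Pow unfolding sgraph_def by (meson finite_Pow_iff finite_subset)

lemma sgraph_no_loop: "sgraph V E \<Longrightarrow> {x} \<notin> E"
  unfolding sgraph_def by fastforce

lemma neighbours_subset: "sgraph V E \<Longrightarrow> neighbours E v \<subseteq> V"
  unfolding sgraph_def neighbours_def by auto

lemma finite_neighbours: "sgraph V E \<Longrightarrow> finite (neighbours E v)"
  using neighbours_subset unfolding sgraph_def by (meson finite_subset)

lemma degree_eq_card_neighbours:
  assumes "sgraph V E"
  shows "degree E v = card (neighbours E v)"
proof -
  have "bij_betw (\<lambda>u. {v, u}) (neighbours E v) {e\<in>E. v \<in> e}"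
  proof (rule bij_betwI')
    fix x y assume "x \<in> neighbours E v" "y \<in> neighbours E v"
    then show "({v, x} = {v, y}) = (x = y)"
      using sgraph_no_loop[OF assms] unfolding neighbours_def by (metis doubleton_eq_iff)
  next
    fix e assume e: "e \<in> {e\<in>E. v \<in> e}"
    then obtain a b where "e = {a, b}" using sgraph_edgeE[OF assms] by blast
    with e show "\<exists>u\<in>neighbours E v. e = {v, u}"
      unfolding neighbours_def by (cases "v = a") (auto simp: insert_commute)
  qed (auto simp: neighbours_def)
  then show ?thesis unfolding degree_def by (metis bij_betw_same_card)
qed

lemma degree_mono: "E' \<subseteq> E \<Longrightarrow> finite E \<Longrightarrow> degree E' v \<le> degree E v"
  unfolding degree_def by (intro card_mono) auto

lemma degenerate_subgraph:
  assumes "subgraph V' E' V E" "degenerate d V E"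
  shows "degenerate d V' E'"
  unfolding degenerate_def
proof (intro allI impI)
  fix V'' E'' assume "subgraph V'' E'' V' E' \<and> V'' \<noteq> {}"
  with assms(1) have "subgraph V'' E'' V E \<and> V'' \<noteq> {}" unfolding subgraph_def by auto
  with assms(2) show "\<exists>v\<in>V''. degree E'' v \<le> d" unfolding degenerate_def by blast
qed

lemma degenerate_empty: "degenerate d V {}"
  unfolding degenerate_def subgraph_def degree_def by auto

lemma finite_alpha_d_candidates:
  "finite VH \<Longrightarrow>
   finite {card S | S. S \<subseteq> VH \<and> (\<forall>x\<in>S. \<forall>y\<in>S. {x, y} \<notin> EH) \<and> (\<forall>x\<in>S. degree EH x \<le> d)}"
  by (rule finite_subset[of _ "card ` Pow VH"]) auto

lemma card_le_alpha_d:
  assumes "finite VH" "S \<subseteq> VH" "\<forall>x\<in>S. \<forall>y\<in>S. {x, y} \<notin> EH" "\<forall>x\<in>S. degree EH x \<le> d"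
  shows "card S \<le> alpha_d d VH EH"
  unfolding alpha_d_def using assms by (intro Max_ge finite_alpha_d_candidates) auto

lemma alpha_d_attained:
  assumes "finite VH"
  obtains S where "S \<subseteq> VH" "\<forall>x\<in>S. \<forall>y\<in>S. {x, y} \<notin> EH" "\<forall>x\<in>S. degree EH x \<le> d"
    "card S = alpha_d d VH EH"
proof -
  let ?A = "{card S | S. S \<subseteq> VH \<and> (\<forall>x\<in>S. \<forall>y\<in>S. {x, y} \<notin> EH) \<and> (\<forall>x\<in>S. degree EH x \<le> d)}"
  have "card {} \<in> ?A" by (intro CollectI exI[of _ "{}"]) simp
  then have "alpha_d d VH EH \<in> ?A"
    unfolding alpha_d_def using finite_alpha_d_candidates[OF assms] by (intro Max_in) auto
  then obtain S where "alpha_d d VH EH = card S" "S \<subseteq> VH"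
    "\<forall>x\<in>S. \<forall>y\<in>S. {x, y} \<notin> EH" "\<forall>x\<in>S. degree EH x \<le> d"
    by auto
  then show ?thesis using that[of S] by simp
qed

lemma image_edge_iff:
  assumes "inj_on \<phi> V" "sgraph V E" "x \<in> V" "y \<in> V"
  shows "{\<phi> x, \<phi> y} \<in> image \<phi> ` E \<longleftrightarrow> {x, y} \<in> E"
proof
  assume "{\<phi> x, \<phi> y} \<in> image \<phi> ` E"
  then obtain e where e: "e \<in> E" "\<phi> ` e = \<phi> ` {x, y}" by auto
  have "e \<in> Pow V" "{x, y} \<in> Pow V"
    using e assms(3,4) sgraph_edges_subset_Pow[OF assms(2)] by auto
  with e show "{x, y} \<in> E" using inj_onD[OF inj_on_image_Pow[OF assms(1)]] by metis
next
  assume "{x, y} \<in> E"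
  then have "\<phi> ` {x, y} \<in> image \<phi> ` E" by (rule imageI)
  then show "{\<phi> x, \<phi> y} \<in> image \<phi> ` E" by simp
qed

lemma sgraph_image:
  assumes "inj_on \<phi> V" "sgraph V E"
  shows "sgraph (\<phi> ` V) (image \<phi> ` E)"
  using assms unfolding sgraph_def by (auto simp: card_image inj_on_subset)

lemma sgraph_add_vertices: "sgraph V E \<Longrightarrow> V \<subseteq> V' \<Longrightarrow> finite V' \<Longrightarrow> sgraph V' E"
  unfolding sgraph_def by blast

lemma degenerate_add_vertices:
  assumes "sgraph V E" "degenerate d V E" "V \<subseteq> V'"
  shows "degenerate d V' E"
  unfolding degenerate_def
proof (intro allI impI, elim conjE)
  fix V'' E'' assume sub: "subgraph V'' E'' V' E" and "V'' \<noteq> {}"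
  show "\<exists>v\<in>V''. degree E'' v \<le> d"
  proof (cases "V'' \<subseteq> V")
    case True
    then have "subgraph V'' E'' V E" using sub unfolding subgraph_def by blast
    with assms(2) \<open>V'' \<noteq> {}\<close> show ?thesis unfolding degenerate_def by blast
  next
    case False
    then obtain v where "v \<in> V''" "v \<notin> V" by auto
    moreover have "{e\<in>E''. v \<in> e} = {}"
      using sub \<open>v \<notin> V\<close> sgraph_edges_subset_Pow[OF assms(1)] unfolding subgraph_def by auto
    ultimately have "degree E'' v = 0" unfolding degree_def by (simp only: card.empty)
    with \<open>v \<in> V''\<close> show ?thesis by force
  qed
qed

lemma degenerate_image:
  assumes inj: "inj_on \<phi> A" and sA: "sgraph A EA" and dA: "degenerate d A EA"
  shows "degenerate d (\<phi> ` A) (image \<phi> ` EA)"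
  unfolding degenerate_def
proof (intro allI impI, elim conjE)
  fix V' E' assume sub: "subgraph V' E' (\<phi> ` A) (image \<phi> ` EA)" and "V' \<noteq> {}"
  define V'' where "V'' = {x\<in>A. \<phi> x \<in> V'}"
  define E'' where "E'' = {e\<in>EA. \<phi> ` e \<in> E'}"
  have s': "sgraph V' E'" using sub unfolding subgraph_def by blast
  have "subgraph V'' E'' A EA"
    using sA s' sgraph_edges_subset_Pow[OF s'] sgraph_edges_subset_Pow[OF sA]
    unfolding subgraph_def sgraph_def V''_def E''_def by auto
  moreover have "V'' \<noteq> {}" using sub \<open>V' \<noteq> {}\<close> unfolding V''_def subgraph_def by auto
  ultimately obtain x where x: "x \<in> V''" "degree E'' x \<le> d"
    using dA unfolding degenerate_def by blast
  have "{e'\<in>E'. \<phi> x \<in> e'} \<subseteq> image \<phi> ` {e\<in>E''. x \<in> e}"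
  proof
    fix e' assume e': "e' \<in> {e'\<in>E'. \<phi> x \<in> e'}"
    then obtain e where e: "e \<in> EA" "e' = \<phi> ` e" using sub unfolding subgraph_def by auto
    have "x \<in> e"
      using e e' x sgraph_edges_subset_Pow[OF sA] inj unfolding V''_def by (auto dest: inj_onD)
    with e e' show "e' \<in> image \<phi> ` {e\<in>E''. x \<in> e}" unfolding E''_def by auto
  qed
  moreover have "finite E''" using sgraph_finite_edges[OF sA] unfolding E''_def by auto
  ultimately have "degree E' (\<phi> x) \<le> card (image \<phi> ` {e\<in>E''. x \<in> e})"
    unfolding degree_def by (intro card_mono) auto
  also have "\<dots> \<le> degree E'' x"
    unfolding degree_def using \<open>finite E''\<close> by (intro card_image_le) auto
  finally have "degree E' (\<phi> x) \<le> degree E'' x" .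
  with x show "\<exists>v\<in>V'. degree E' v \<le> d" unfolding V''_def by force
qed

lemma graph_iso_image:
  assumes "inj_on g V" "sgraph V E"
  shows "graph_iso V E (g ` V) (image g ` E)"
  unfolding graph_iso_def using assms image_edge_iff[OF assms]
  by (intro exI[of _ g]) (simp add: bij_betw_imageI)

lemma graph_iso_trans:
  assumes "graph_iso V1 E1 V2 E2" "graph_iso V2 E2 V3 E3"
  shows "graph_iso V1 E1 V3 E3"
proof -
  obtain f where f: "bij_betw f V1 V2" "\<forall>x\<in>V1. \<forall>y\<in>V1. {x, y} \<in> E1 \<longleftrightarrow> {f x, f y} \<in> E2"
    using assms(1) unfolding graph_iso_def by blast
  obtain g where g: "bij_betw g V2 V3" "\<forall>x\<in>V2. \<forall>y\<in>V2. {x, y} \<in> E2 \<longleftrightarrow> {g x, g y} \<in> E3"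
    using assms(2) unfolding graph_iso_def by blast
  have "\<forall>x\<in>V1. \<forall>y\<in>V1. {x, y} \<in> E1 \<longleftrightarrow> {(g \<circ> f) x, (g \<circ> f) y} \<in> E3"
    using f(2) g(2) bij_betwE[OF f(1)] by simp
  with bij_betw_trans[OF f(1) g(1)] show ?thesis unfolding graph_iso_def by blast
qed

lemma graph_iso_edges_eq_image:
  assumes sH: "sgraph VH EH" and s': "sgraph V' E'" and b: "bij_betw g VH V'"
    and iso: "\<forall>x\<in>VH. \<forall>y\<in>VH. {x, y} \<in> EH \<longleftrightarrow> {g x, g y} \<in> E'"
  shows "E' = image g ` EH"
proof
  show "E' \<subseteq> image g ` EH"
  proof
    fix e assume e: "e \<in> E'"
    then obtain a b where ab: "e = {a, b}" "a \<in> V'" "b \<in> V'" using sgraph_edgeE[OF s'] by metis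
    then obtain x y where xy: "x \<in> VH" "y \<in> VH" "a = g x" "b = g y"
      using b by (metis bij_betw_imp_surj_on imageE)
    with iso[rule_format, of x y] e ab have "{x, y} \<in> EH" by simp
    moreover have "e = g ` {x, y}" using ab xy by simp
    ultimately show "e \<in> image g ` EH" by blast
  qed
next
  show "image g ` EH \<subseteq> E'"
  proof
    fix e assume "e \<in> image g ` EH"
    then obtain e0 where "e0 \<in> EH" "e = g ` e0" by blast
    moreover obtain x y where "e0 = {x, y}" "x \<in> VH" "y \<in> VH"
      using sgraph_edgeE[OF sH \<open>e0 \<in> EH\<close>] by metis
    ultimately show "e \<in> E'" using iso[rule_format, of x y] by simp
  qed
qed

lemma degenerate_graph_iso:
  assumes sH: "sgraph VH EH" and s': "sgraph V' E'" and iso: "graph_iso VH EH V' E'"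
    and d': "degenerate d V' E'"
  shows "degenerate d VH EH"
proof -
  obtain f where b: "bij_betw f VH V'" and iso_f: "\<forall>x\<in>VH. \<forall>y\<in>VH. {x, y} \<in> EH \<longleftrightarrow> {f x, f y} \<in> E'"
    using iso unfolding graph_iso_def by blast
  define \<phi> where "\<phi> = inv_into VH f"
  have b\<phi>: "bij_betw \<phi> V' VH" unfolding \<phi>_def by (rule bij_betw_inv_into[OF b])
  have "image \<phi> ` E' = (\<lambda>e. \<phi> ` f ` e) ` EH"
    unfolding graph_iso_edges_eq_image[OF sH s' b iso_f] image_image ..
  also have "\<dots> = (\<lambda>e. e) ` EH"
    using sgraph_edges_subset_Pow[OF sH] bij_betw_imp_inj_on[OF b] unfolding \<phi>_def
    by (intro image_cong refl inv_into_image_cancel) auto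
  finally have "image \<phi> ` E' = EH" by simp
  with degenerate_image[OF bij_betw_imp_inj_on[OF b\<phi>] s' d'] show ?thesis
    using bij_betw_imp_surj_on[OF b\<phi>] by simp
qed

lemma finite_copies:
  "finite V \<Longrightarrow> finite E \<Longrightarrow> finite {(V', E'). subgraph V' E' V E \<and> graph_iso VH EH V' E'}"
  by (rule finite_subset[of _ "Pow V \<times> Pow E"]) (auto simp: subgraph_def)

lemma num_copies_image_le:
  assumes inj: "inj_on \<phi> B" and sB: "sgraph B EB" and sub: "\<phi> ` B \<subseteq> V" and fV: "finite V"
  shows "num_copies VH EH B EB \<le> num_copies VH EH V (image \<phi> ` EB)"
proof -
  let ?CB = "{(V', E'). subgraph V' E' B EB \<and> graph_iso VH EH V' E'}"
  let ?CG = "{(V', E'). subgraph V' E' V (image \<phi> ` EB) \<and> graph_iso VH EH V' E'}"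
  define F where "F = map_prod (image \<phi>) (image (image \<phi>))"
  have "inj_on F (Pow B \<times> Pow (Pow B))"
    unfolding F_def using inj_on_image_Pow[OF inj] inj_on_image_Pow[OF inj_on_image_Pow[OF inj]]
    by (rule map_prod_inj_on)
  moreover have "?CB \<subseteq> Pow B \<times> Pow (Pow B)"
    using sgraph_edges_subset_Pow[OF sB] unfolding subgraph_def by auto
  ultimately have "inj_on F ?CB" by (rule inj_on_subset)
  moreover have "F ` ?CB \<subseteq> ?CG"
  proof
    fix z assume "z \<in> F ` ?CB"
    then obtain V' E' where z: "z = F (V', E')" and c: "subgraph V' E' B EB" "graph_iso VH EH V' E'"
      by force
    then have VB: "V' \<subseteq> B" and s': "sgraph V' E'" and EE: "E' \<subseteq> EB"
      unfolding subgraph_def by auto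
    have injV: "inj_on \<phi> V'" using inj VB by (rule inj_on_subset)
    have "subgraph (\<phi> ` V') (image \<phi> ` E') V (image \<phi> ` EB)"
      using order_trans[OF image_mono[OF VB] sub] image_mono[OF EE] sgraph_image[OF injV s']
      unfolding subgraph_def by simp
    moreover have "graph_iso VH EH (\<phi> ` V') (image \<phi> ` E')"
      using graph_iso_trans[OF c(2) graph_iso_image[OF injV s']] .
    ultimately show "z \<in> ?CG" unfolding z F_def by simp
  qed
  moreover have "finite ?CG" using finite_copies[OF fV finite_imageI[OF sgraph_finite_edges[OF sB]]] .
  ultimately show ?thesis unfolding num_copies_def by (rule card_inj_on_le)
qed

lemma finite_ex_degen_candidates:
  "finite {num_copies VH EH {..<n} E | E :: nat set set. sgraph {..<n} E \<and> degenerate d {..<n} E}"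
proof -
  have "{E :: nat set set. sgraph {..<n} E \<and> degenerate d {..<n} E} \<subseteq> Pow (Pow {..<n})"
    using sgraph_edges_subset_Pow by blast
  then show ?thesis by (intro finite_image_set) (simp add: finite_subset)
qed

lemma ex_degen_le:
  assumes "\<And>E :: nat set set. sgraph {..<n} E \<Longrightarrow> degenerate d {..<n} E \<Longrightarrow> num_copies VH EH {..<n} E \<le> K"
  shows "ex_degen VH EH d n \<le> K"
proof -
  have "sgraph {..<n} ({} :: nat set set)" unfolding sgraph_def by simp
  then have "{num_copies VH EH {..<n} E | E :: nat set set. sgraph {..<n} E \<and> degenerate d {..<n} E} \<noteq> {}"
    using degenerate_empty by blast
  then show ?thesis
    unfolding ex_degen_def using finite_ex_degen_candidates assms by (subst Max_le_iff) auto
qed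

lemma num_copies_le_ex_degen:
  assumes sB: "sgraph B EB" and dB: "degenerate d B EB" and card: "card B \<le> n"
  shows "num_copies VH EH B EB \<le> ex_degen VH EH d n"
proof -
  obtain \<phi> where \<phi>: "bij_betw \<phi> B {0..<card B}"
    using sB unfolding sgraph_def by (metis ex_bij_betw_finite_nat)
  have inj: "inj_on \<phi> B" using \<phi> by (rule bij_betw_imp_inj_on)
  have sub: "\<phi> ` B \<subseteq> {..<n}" using \<phi> card by (auto simp: bij_betw_def)
  have sG: "sgraph {..<n} (image \<phi> ` EB)"
    using sgraph_add_vertices[OF sgraph_image[OF inj sB] sub] by simp
  have dG: "degenerate d {..<n} (image \<phi> ` EB)"
    using degenerate_add_vertices[OF sgraph_image[OF inj sB] degenerate_image[OF inj sB dB] sub] .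
  have "num_copies VH EH B EB \<le> num_copies VH EH {..<n} (image \<phi> ` EB)"
    using num_copies_image_le[OF inj sB sub] by simp
  also have "\<dots> \<le> ex_degen VH EH d n"
    unfolding ex_degen_def using finite_ex_degen_candidates sG dG by (intro Max_ge) auto
  finally show ?thesis .
qed

lemma num_copies_eq_0_if_not_degenerate:
  assumes sH: "sgraph VH EH" and nd: "\<not> degenerate d VH EH" and dG: "degenerate d V E"
  shows "num_copies VH EH V E = 0"
proof -
  have "\<not> (subgraph V' E' V E \<and> graph_iso VH EH V' E')" for V' E'
  proof
    assume c: "subgraph V' E' V E \<and> graph_iso VH EH V' E'"
    then have "sgraph V' E'" unfolding subgraph_def by simp
    with c degenerate_graph_iso[OF sH] degenerate_subgraph[OF _ dG] nd show False by blast
  qed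
  then have "{(V', E'). subgraph V' E' V E \<and> graph_iso VH EH V' E'} = {}" by auto
  then show ?thesis unfolding num_copies_def by (simp only: card.empty)
qed

lemma ex_degen_eq_0_if_not_degenerate:
  "sgraph VH EH \<Longrightarrow> \<not> degenerate d VH EH \<Longrightarrow> ex_degen VH EH d n = 0"
  using ex_degen_le[of n d VH EH 0] num_copies_eq_0_if_not_degenerate by fastforce

section \<open>Degeneracy orderings and walks\<close>

definition forward_neighbours :: "'a set set \<Rightarrow> ('a \<Rightarrow> nat) \<Rightarrow> 'a \<Rightarrow> 'a set" where
  "forward_neighbours E r v = {u \<in> neighbours E v. r v < r u}"

lemma finite_forward_neighbours: "sgraph V E \<Longrightarrow> finite (forward_neighbours E r v)"
  unfolding forward_neighbours_def by (simp add: finite_neighbours)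

lemma degenerate_ordering:
  assumes "sgraph V E" "degenerate d V E"
  shows "\<exists>r. inj_on r V \<and> (\<forall>v\<in>V. card (forward_neighbours E r v) \<le> d)"
  using assms
proof (induction "card V" arbitrary: V E rule: less_induct)
  case less
  show ?case
  proof (cases "V = {}")
    case False
    have "subgraph V E V E" using less.prems unfolding subgraph_def by auto
    then obtain v where v: "v \<in> V" "degree E v \<le> d"
      using less.prems False unfolding degenerate_def by blast
    define E0 where "E0 = {e\<in>E. v \<notin> e}"
    have sub0: "subgraph (V - {v}) E0 V E"
      using less.prems(1) unfolding subgraph_def sgraph_def E0_def by auto
    then have s0: "sgraph (V - {v}) E0" unfolding subgraph_def by auto
    have "card (V - {v}) < card V"
      using less.prems(1) v(1) unfolding sgraph_def by (intro card_Diff1_less) auto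
    then obtain r0 where r0: "inj_on r0 (V - {v})" "\<forall>u\<in>V - {v}. card (forward_neighbours E0 r0 u) \<le> d"
      using less.hyps s0 degenerate_subgraph[OF sub0 less.prems(2)] by blast
    define r where "r = (\<lambda>u. if u = v then 0 else Suc (r0 u))"
    have "inj_on r V" using r0(1) unfolding r_def inj_on_def by auto
    moreover have "card (forward_neighbours E r u) \<le> d" if u: "u \<in> V" for u
    proof (cases "u = v")
      case True
      have "forward_neighbours E r u \<subseteq> neighbours E v"
        unfolding forward_neighbours_def using True by auto
      then have "card (forward_neighbours E r u) \<le> card (neighbours E v)"
        using finite_neighbours[OF less.prems(1)] by (rule card_mono[rotated])
      then show ?thesis using v degree_eq_card_neighbours[OF less.prems(1)] by simp
    next
      case False
      have "forward_neighbours E r u \<subseteq> forward_neighbours E0 r0 u"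
        unfolding forward_neighbours_def neighbours_def E0_def r_def using False
        by (auto split: if_splits)
      then have "card (forward_neighbours E r u) \<le> card (forward_neighbours E0 r0 u)"
        using finite_forward_neighbours[OF s0] by (rule card_mono[rotated])
      moreover have "card (forward_neighbours E0 r0 u) \<le> d" using r0(2) u False by blast
      ultimately show ?thesis by linarith
    qed
    ultimately show ?thesis by blast
  qed auto
qed

fun walk :: "'a::linorder set set \<Rightarrow> ('a \<Rightarrow> nat) \<Rightarrow> 'a \<Rightarrow> nat list \<Rightarrow> 'a" where
  "walk E r v [] = v"
| "walk E r v (i # is) = walk E r (sorted_list_of_set (forward_neighbours E r v) ! i) is"

lemma walk_append: "walk E r v (is @ js) = walk E r (walk E r v is) js"
  by (induction "is" arbitrary: v) auto

lemma walk_snoc_exists: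
  assumes "finite (forward_neighbours E r (walk E r v is))" "u \<in> forward_neighbours E r (walk E r v is)"
  shows "\<exists>i < card (forward_neighbours E r (walk E r v is)). walk E r v (is @ [i]) = u"
proof -
  let ?F = "forward_neighbours E r (walk E r v is)"
  obtain i where "i < length (sorted_list_of_set ?F)" "sorted_list_of_set ?F ! i = u"
    using assms by (metis in_set_conv_nth set_sorted_list_of_set)
  then show ?thesis using assms by (auto simp: walk_append)
qed

definition index_lists :: "nat \<Rightarrow> nat \<Rightarrow> nat list set" where
  "index_lists d k = {is. set is \<subseteq> {..<d} \<and> length is \<le> k}"

lemma finite_index_lists: "finite (index_lists d k)"
  unfolding index_lists_def by (rule finite_lists_length_le) simp

definition sources :: "'b set \<Rightarrow> 'b set set \<Rightarrow> ('b \<Rightarrow> nat) \<Rightarrow> 'b set" where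
  "sources V E \<rho> = {w\<in>V. \<forall>x\<in>V. {x, w} \<in> E \<longrightarrow> \<not> \<rho> x < \<rho> w}"

lemma neighbour_of_source:
  assumes "sgraph V E" "inj_on \<rho> V" "t \<in> sources V E \<rho>" "u \<in> neighbours E t"
  shows "\<rho> t < \<rho> u"
proof -
  have "u \<in> V" "t \<in> V" "{u, t} \<in> E" "u \<noteq> t"
    using assms neighbours_subset[OF assms(1)] sgraph_no_loop[OF assms(1)]
    unfolding sources_def neighbours_def by (auto simp: insert_commute)
  moreover from this have "\<rho> u \<noteq> \<rho> t" using assms(2) by (auto dest: inj_onD)
  ultimately show ?thesis using assms(3) unfolding sources_def by auto
qed

lemma sources_independent:
  assumes "sgraph V E" "inj_on \<rho> V" "x \<in> sources V E \<rho>" "y \<in> sources V E \<rho>"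
  shows "{x, y} \<notin> E"
proof
  assume "{x, y} \<in> E"
  then have "\<rho> x < \<rho> y" "\<rho> y < \<rho> x"
    using neighbour_of_source[OF assms(1,2)] assms(3,4) unfolding neighbours_def
    by (auto simp: insert_commute)
  then show False by simp
qed

section \<open>Upper bound: coding copies by few vertices\<close>

lemma degree_source_le:
  assumes sH: "sgraph VH EH"
    and inj: "inj_on (r \<circ> g) VH"
    and edges: "\<forall>x\<in>VH. \<forall>y\<in>VH. {x, y} \<in> EH \<longrightarrow> {g x, g y} \<in> E"
    and fin: "finite (forward_neighbours E r (g t))"
    and t: "t \<in> sources VH EH (r \<circ> g)"
  shows "degree EH t \<le> card (forward_neighbours E r (g t))"
proof -
  have N: "neighbours EH t \<subseteq> VH" by (rule neighbours_subset[OF sH])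
  have "t \<in> VH" using t unfolding sources_def by simp
  have "inj_on g (neighbours EH t)" using inj_on_imageI2[OF inj] N by (rule inj_on_subset)
  moreover have "g ` neighbours EH t \<subseteq> forward_neighbours E r (g t)"
  proof
    fix z assume "z \<in> g ` neighbours EH t"
    then obtain u where u: "u \<in> neighbours EH t" "z = g u" by blast
    have "r (g t) < r (g u)" using neighbour_of_source[OF sH inj t u(1)] by simp
    moreover have "{g t, g u} \<in> E"
      using edges \<open>t \<in> VH\<close> N u(1) unfolding neighbours_def by blast
    ultimately show "z \<in> forward_neighbours E r (g t)"
      using u unfolding forward_neighbours_def neighbours_def by simp
  qed
  ultimately have "card (neighbours EH t) \<le> card (forward_neighbours E r (g t))"
    using fin by (rule card_inj_on_le)
  then show ?thesis using degree_eq_card_neighbours[OF sH] by simp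
qed

lemma walk_from_sources:
  assumes sH: "sgraph VH EH" and sG: "sgraph V E"
    and gV: "g ` VH \<subseteq> V"
    and edges: "\<forall>x\<in>VH. \<forall>y\<in>VH. {x, y} \<in> EH \<longrightarrow> {g x, g y} \<in> E"
    and fwd: "\<forall>v\<in>V. card (forward_neighbours E r v) \<le> d"
    and w: "w \<in> VH"
  shows "\<exists>t\<in>sources VH EH (r \<circ> g). \<exists>is. set is \<subseteq> {..<d} \<and>
           length is \<le> card {y\<in>VH. r (g y) < r (g w)} \<and> walk E r (g t) is = g w"
  using w
proof (induction "r (g w)" arbitrary: w rule: less_induct)
  case less
  show ?case
  proof (cases "w \<in> sources VH EH (r \<circ> g)")
    case True
    then show ?thesis by (intro bexI[of _ w] exI[of _ "[]"]) auto
  next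
    case False
    then obtain x where x: "x \<in> VH" "{x, w} \<in> EH" "r (g x) < r (g w)"
      using less.prems unfolding sources_def by auto
    then obtain t "is" where t: "t \<in> sources VH EH (r \<circ> g)" "set is \<subseteq> {..<d}"
        "length is \<le> card {y\<in>VH. r (g y) < r (g x)}" "walk E r (g t) is = g x"
      using less.hyps by blast
    have "g w \<in> forward_neighbours E r (walk E r (g t) is)"
      using edges x less.prems t(4) unfolding forward_neighbours_def neighbours_def by simp
    then obtain i where i: "i < card (forward_neighbours E r (g x))" "walk E r (g t) (is @ [i]) = g w"
      using walk_snoc_exists[OF finite_forward_neighbours[OF sG]] t(4) by metis
    have "g x \<in> V" using gV x(1) by blast
    with i(1) fwd have "i < d" by fastforce
    have "finite VH" using sH unfolding sgraph_def by simp
    moreover have "insert x {y\<in>VH. r (g y) < r (g x)} \<subseteq> {y\<in>VH. r (g y) < r (g w)}" using x by auto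
    ultimately have "Suc (card {y\<in>VH. r (g y) < r (g x)}) \<le> card {y\<in>VH. r (g y) < r (g w)}"
      using card_mono[of "{y\<in>VH. r (g y) < r (g w)}" "insert x {y\<in>VH. r (g y) < r (g x)}"] by simp
    then show ?thesis using t i \<open>i < d\<close> by (intro bexI[of _ t] exI[of _ "is @ [i]"]) auto
  qed
qed

lemma copy_encoding:
  fixes E :: "'a::linorder set set"
  assumes sH: "sgraph VH EH" and sG: "sgraph V E"
    and r: "inj_on r V" "\<forall>v\<in>V. card (forward_neighbours E r v) \<le> d"
    and copy: "subgraph V' E' V E" "graph_iso VH EH V' E'"
  obtains T g where "T \<subseteq> VH" "card T \<le> alpha_d d VH EH" "V' = g ` VH" "E' = image g ` EH"
    "\<forall>w\<in>VH. \<exists>t\<in>T. \<exists>is\<in>index_lists d (card VH). walk E r (g t) is = g w"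
proof -
  obtain g where b: "bij_betw g VH V'" and iso: "\<forall>x\<in>VH. \<forall>y\<in>VH. {x, y} \<in> EH \<longleftrightarrow> {g x, g y} \<in> E'"
    using copy(2) unfolding graph_iso_def by blast
  have s': "sgraph V' E'" and VV: "V' \<subseteq> V" and EE: "E' \<subseteq> E"
    using copy(1) unfolding subgraph_def by auto
  have gV: "g ` VH = V'" using b by (simp add: bij_betw_def)
  then have gVH: "g ` VH \<subseteq> V" using VV by simp
  have fVH: "finite VH" using sH unfolding sgraph_def by simp
  have edges: "\<forall>x\<in>VH. \<forall>y\<in>VH. {x, y} \<in> EH \<longrightarrow> {g x, g y} \<in> E" using iso EE by blast
  have inj: "inj_on (r \<circ> g) VH"
    using comp_inj_on[OF bij_betw_imp_inj_on[OF b] inj_on_subset[OF r(1) gVH]] .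
  define T where "T = sources VH EH (r \<circ> g)"
  have TV: "T \<subseteq> VH" unfolding T_def sources_def by auto
  have "card T \<le> alpha_d d VH EH"
  proof (rule card_le_alpha_d[OF fVH TV])
    show "\<forall>x\<in>T. \<forall>y\<in>T. {x, y} \<notin> EH" using sources_independent[OF sH inj] unfolding T_def by blast
    show "\<forall>t\<in>T. degree EH t \<le> d"
    proof
      fix t assume t: "t \<in> T"
      then have "g t \<in> V" using TV gVH by auto
      then have "card (forward_neighbours E r (g t)) \<le> d" using r(2) by blast
      moreover have "degree EH t \<le> card (forward_neighbours E r (g t))"
        using degree_source_le[OF sH inj edges finite_forward_neighbours[OF sG]] t unfolding T_def .
      ultimately show "degree EH t \<le> d" by linarith
    qed
  qed
  moreover have "\<forall>w\<in>VH. \<exists>t\<in>T. \<exists>is\<in>index_lists d (card VH). walk E r (g t) is = g w"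
  proof
    fix w assume "w \<in> VH"
    obtain t "is" where "t \<in> T" "set is \<subseteq> {..<d}"
        "length is \<le> card {y\<in>VH. r (g y) < r (g w)}" "walk E r (g t) is = g w"
      using walk_from_sources[OF sH sG gVH edges r(2) \<open>w \<in> VH\<close>]
      unfolding T_def by blast
    moreover have "card {y\<in>VH. r (g y) < r (g w)} \<le> card VH" using fVH by (intro card_mono) auto
    ultimately show "\<exists>t\<in>T. \<exists>is\<in>index_lists d (card VH). walk E r (g t) is = g w"
      unfolding index_lists_def by force
  qed
  ultimately show ?thesis
    using that TV gV graph_iso_edges_eq_image[OF sH s' b iso] by blast
qed

text \<open>A copy of H in a graph with an ordering r is coded by the set T of its vertices without
  earlier neighbour, their images h, and for every vertex w of H a vertex of T together with the
  list of indices of a walk through later neighbours that leads from it to w.\<close>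

definition codes :: "'b set \<Rightarrow> nat \<Rightarrow> 'a set \<Rightarrow> nat list set \<Rightarrow>
    ('b set \<times> ('b \<Rightarrow> 'a) \<times> ('b \<Rightarrow> 'b \<times> nat list)) set" where
  "codes VH \<alpha> V L = (SIGMA T:{T. T \<subseteq> VH \<and> card T \<le> \<alpha>}. (T \<rightarrow>\<^sub>E V) \<times> (VH \<rightarrow>\<^sub>E VH \<times> L))"

definition decode :: "'a::linorder set set \<Rightarrow> ('a \<Rightarrow> nat) \<Rightarrow> 'b set \<Rightarrow> 'b set set \<Rightarrow>
    'b set \<times> ('b \<Rightarrow> 'a) \<times> ('b \<Rightarrow> 'b \<times> nat list) \<Rightarrow> 'a set \<times> 'a set set" where
  "decode E r VH EH =
     (\<lambda>(T, h, \<delta>). let g = (\<lambda>w. walk E r (h (fst (\<delta> w))) (snd (\<delta> w))) in (g ` VH, image g ` EH))"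

lemma finite_codes: "finite VH \<Longrightarrow> finite V \<Longrightarrow> finite L \<Longrightarrow> finite (codes VH \<alpha> V L)"
  unfolding codes_def
  by (intro finite_SigmaI finite_cartesian_product finite_PiE) (auto intro: finite_subset)

lemma card_codes_le:
  assumes "finite VH" "finite V" "finite L" "V \<noteq> {}"
  shows "card (codes VH \<alpha> V L) \<le> 2 ^ card VH * card V ^ \<alpha> * (card VH * card L) ^ card VH"
proof -
  let ?P = "{T. T \<subseteq> VH \<and> card T \<le> \<alpha>}"
  have fP: "finite ?P" using assms(1) by simp
  have fin: "finite T" if "T \<in> ?P" for T using that assms(1) by (auto intro: finite_subset)
  have "card (codes VH \<alpha> V L) = (\<Sum>T\<in>?P. card ((T \<rightarrow>\<^sub>E V) \<times> (VH \<rightarrow>\<^sub>E VH \<times> L)))"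
    unfolding codes_def
    by (intro card_SigmaI fP ballI finite_cartesian_product finite_PiE)
      (use assms in \<open>auto intro: finite_subset\<close>)
  also have "\<dots> \<le> (\<Sum>T\<in>?P. card V ^ \<alpha> * (card VH * card L) ^ card VH)"
  proof (rule sum_mono)
    fix T assume T: "T \<in> ?P"
    have "card ((T \<rightarrow>\<^sub>E V) \<times> (VH \<rightarrow>\<^sub>E VH \<times> L)) = card V ^ card T * (card VH * card L) ^ card VH"
      by (simp add: card_cartesian_product card_funcsetE[OF fin[OF T]] card_funcsetE[OF assms(1)])
    also have "\<dots> \<le> card V ^ \<alpha> * (card VH * card L) ^ card VH"
      using T assms(2,4) by (intro mult_right_mono power_increasing) (auto simp: Suc_le_eq card_gt_0_iff)
    finally show "card ((T \<rightarrow>\<^sub>E V) \<times> (VH \<rightarrow>\<^sub>E VH \<times> L)) \<le> card V ^ \<alpha> * (card VH * card L) ^ card VH" .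
  qed
  also have "\<dots> = card ?P * (card V ^ \<alpha> * (card VH * card L) ^ card VH)" by simp
  also have "\<dots> \<le> card (Pow VH) * (card V ^ \<alpha> * (card VH * card L) ^ card VH)"
    by (intro mult_right_mono card_mono) (use assms(1) in auto)
  finally show ?thesis using assms(1) by (simp add: card_Pow mult.assoc)
qed

lemma decode_eq_image:
  assumes "sgraph VH EH" "\<forall>w\<in>VH. walk E r (h (fst (\<delta> w))) (snd (\<delta> w)) = g w"
  shows "decode E r VH EH (T, h, \<delta>) = (g ` VH, image g ` EH)"
proof -
  define g' where "g' = (\<lambda>w. walk E r (h (fst (\<delta> w))) (snd (\<delta> w)))"
  have "image g' ` EH = image g ` EH"
  proof (rule image_cong[OF refl])
    fix e assume "e \<in> EH"
    then have "e \<subseteq> VH" using sgraph_edges_subset_Pow[OF assms(1)] by auto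
    then show "g' ` e = g ` e" using assms(2) unfolding g'_def by (intro image_cong) auto
  qed
  moreover have "g' ` VH = g ` VH" using assms(2) unfolding g'_def by (intro image_cong) auto
  ultimately show ?thesis unfolding decode_def g'_def by (simp only: Let_def prod.case)
qed

lemma copies_subset_decode_codes:
  fixes E :: "'a::linorder set set"
  assumes sH: "sgraph VH EH" and sG: "sgraph V E"
    and r: "inj_on r V" "\<forall>v\<in>V. card (forward_neighbours E r v) \<le> d"
  shows "{(V', E'). subgraph V' E' V E \<and> graph_iso VH EH V' E'}
           \<subseteq> decode E r VH EH ` codes VH (alpha_d d VH EH) V (index_lists d (card VH))"
proof clarify
  fix V' E' assume copy: "subgraph V' E' V E" "graph_iso VH EH V' E'"
  obtain T g where T: "T \<subseteq> VH" "card T \<le> alpha_d d VH EH" and g: "V' = g ` VH" "E' = image g ` EH"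
    and reach: "\<forall>w\<in>VH. \<exists>t\<in>T. \<exists>is\<in>index_lists d (card VH). walk E r (g t) is = g w"
    using copy_encoding[OF sH sG r copy] .
  have "\<forall>w\<in>VH. \<exists>p. p \<in> T \<times> index_lists d (card VH) \<and> walk E r (g (fst p)) (snd p) = g w"
    using reach by fastforce
  then obtain \<delta> where \<delta>: "\<forall>w\<in>VH. \<delta> w \<in> T \<times> index_lists d (card VH) \<and> walk E r (g (fst (\<delta> w))) (snd (\<delta> w)) = g w"
    by (metis bchoice)
  have "restrict \<delta> VH \<in> VH \<rightarrow>\<^sub>E VH \<times> index_lists d (card VH)"
    unfolding restrict_PiE_iff
  proof
    fix w assume "w \<in> VH"
    with \<delta> have "\<delta> w \<in> T \<times> index_lists d (card VH)" by blast
    with T(1) show "\<delta> w \<in> VH \<times> index_lists d (card VH)" by (auto simp: mem_Times_iff)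
  qed
  moreover have "restrict g T \<in> T \<rightarrow>\<^sub>E V" using T(1) g(1) copy(1) unfolding subgraph_def by auto
  ultimately have "(T, restrict g T, restrict \<delta> VH) \<in> codes VH (alpha_d d VH EH) V (index_lists d (card VH))"
    using T unfolding codes_def by simp
  moreover have "\<forall>w\<in>VH. walk E r (restrict g T (fst (restrict \<delta> VH w))) (snd (restrict \<delta> VH w)) = g w"
  proof
    fix w assume "w \<in> VH"
    then show "walk E r (restrict g T (fst (restrict \<delta> VH w))) (snd (restrict \<delta> VH w)) = g w"
      using bspec[OF \<delta> \<open>w \<in> VH\<close>] by (auto simp: mem_Times_iff)
  qed
  then have "decode E r VH EH (T, restrict g T, restrict \<delta> VH) = (V', E')"
    unfolding g by (rule decode_eq_image[OF sH])
  ultimately show "(V', E') \<in> decode E r VH EH ` codes VH (alpha_d d VH EH) V (index_lists d (card VH))"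
    by (metis image_eqI)
qed

lemma num_copies_degenerate_le:
  fixes E :: "'a::linorder set set"
  assumes sH: "sgraph VH EH" and sG: "sgraph V E" and dG: "degenerate d V E" and ne: "V \<noteq> {}"
  shows "num_copies VH EH V E \<le>
    2 ^ card VH * (card VH * card (index_lists d (card VH))) ^ card VH * card V ^ alpha_d d VH EH"
proof -
  obtain r where r: "inj_on r V" "\<forall>v\<in>V. card (forward_neighbours E r v) \<le> d"
    using degenerate_ordering[OF sG dG] by blast
  let ?codes = "codes VH (alpha_d d VH EH) V (index_lists d (card VH))"
  have fin: "finite VH" "finite V" using sH sG unfolding sgraph_def by simp_all
  then have fin_codes: "finite ?codes" using finite_index_lists by (intro finite_codes)
  have "num_copies VH EH V E \<le> card (decode E r VH EH ` ?codes)"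
    unfolding num_copies_def
    using copies_subset_decode_codes[OF sH sG r] finite_imageI[OF fin_codes] by (rule card_mono[rotated])
  also have "\<dots> \<le> card ?codes" using fin_codes by (rule card_image_le)
  also have "\<dots> \<le> 2 ^ card VH * card V ^ alpha_d d VH EH * (card VH * card (index_lists d (card VH))) ^ card VH"
    using fin ne finite_index_lists by (intro card_codes_le)
  finally show ?thesis by (simp only: ac_simps)
qed

lemma ex_degen_upper_bound:
  assumes "sgraph VH EH"
  shows "\<exists>c2>0. \<forall>n\<ge>1. real (ex_degen VH EH d n) \<le> c2 * real n ^ alpha_d d VH EH"
proof -
  define K where "K = 2 ^ card VH * (card VH * card (index_lists d (card VH))) ^ card VH"
  have bound: "ex_degen VH EH d n \<le> K * n ^ alpha_d d VH EH" if n: "n \<ge> 1" for n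
  proof (rule ex_degen_le)
    fix E :: "nat set set" assume sG: "sgraph {..<n} E" and dG: "degenerate d {..<n} E"
    have "0 \<in> {..<n}" using n by simp
    then have "{..<n} \<noteq> {}" by blast
    from num_copies_degenerate_le[OF assms sG dG this]
    show "num_copies VH EH {..<n} E \<le> K * n ^ alpha_d d VH EH" unfolding K_def by simp
  qed
  have "real (ex_degen VH EH d n) \<le> (real K + 1) * real n ^ alpha_d d VH EH" if "n \<ge> 1" for n
  proof -
    have "real (ex_degen VH EH d n) \<le> real K * real n ^ alpha_d d VH EH"
      using bound[OF that] by (metis of_nat_le_iff of_nat_mult of_nat_power)
    also have "\<dots> \<le> (real K + 1) * real n ^ alpha_d d VH EH" by (simp add: mult_right_mono)
    finally show ?thesis .
  qed
  then show ?thesis by (intro exI[of _ "real K + 1"]) auto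
qed

section \<open>Lower bound: blow-ups\<close>

definition blowup_vertices :: "'b set \<Rightarrow> 'b set \<Rightarrow> nat \<Rightarrow> ('b \<times> nat) set" where
  "blowup_vertices VH S m = {(w, i). w \<in> VH \<and> (if w \<in> S then i < m else i = 0)}"

definition blowup_edges :: "'b set \<Rightarrow> 'b set set \<Rightarrow> 'b set \<Rightarrow> nat \<Rightarrow> ('b \<times> nat) set set" where
  "blowup_edges VH EH S m =
     {{p, q} | p q. p \<in> blowup_vertices VH S m \<and> q \<in> blowup_vertices VH S m \<and> {fst p, fst q} \<in> EH}"

lemma blowup_vertices_subset: "blowup_vertices VH S m \<subseteq> VH \<times> {..<max m 1}"
  unfolding blowup_vertices_def by (auto split: if_splits)

lemma sgraph_blowup:
  assumes sH: "sgraph VH EH"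
  shows "sgraph (blowup_vertices VH S m) (blowup_edges VH EH S m)"
  unfolding sgraph_def
proof (intro conjI ballI)
  show "finite (blowup_vertices VH S m)"
    using sH unfolding sgraph_def by (intro finite_subset[OF blowup_vertices_subset]) simp
  fix e assume "e \<in> blowup_edges VH EH S m"
  then obtain p q where pq: "e = {p, q}" "p \<in> blowup_vertices VH S m" "q \<in> blowup_vertices VH S m"
    "{fst p, fst q} \<in> EH"
    unfolding blowup_edges_def by auto
  have "p \<noteq> q" using pq(4) sgraph_no_loop[OF sH] by auto
  with pq show "e \<subseteq> blowup_vertices VH S m" "card e = 2" by auto
qed

lemma neighbours_blowup_subset:
  assumes ind: "\<forall>x\<in>S. \<forall>y\<in>S. {x, y} \<notin> EH" and p: "fst p \<in> S"
  shows "neighbours (blowup_edges VH EH S m) p \<subseteq> (\<lambda>y. (y, 0)) ` neighbours EH (fst p)"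
proof
  fix q assume "q \<in> neighbours (blowup_edges VH EH S m) p"
  then obtain p' q' where pq: "{p, q} = {p', q'}" "p' \<in> blowup_vertices VH S m"
      "q' \<in> blowup_vertices VH S m" "{fst p', fst q'} \<in> EH"
    unfolding neighbours_def blowup_edges_def by auto
  have "fst ` {p, q} = fst ` {p', q'}" using pq(1) by simp
  then have fe: "{fst p, fst q} \<in> EH" using pq(4) by simp
  then have "fst q \<notin> S" using ind p by auto
  moreover have "q \<in> blowup_vertices VH S m" using pq(1-3) by (metis insert_iff singletonD)
  ultimately have "q = (fst q, 0)" unfolding blowup_vertices_def by (cases q) auto
  with fe show "q \<in> (\<lambda>y. (y, 0)) ` neighbours EH (fst p)" unfolding neighbours_def by (metis image_eqI mem_Collect_eq)
qed

lemma subgraph_blowup_layer_0: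
  assumes sub: "subgraph V' E' (blowup_vertices VH S m) (blowup_edges VH EH S m)"
    and V'S: "\<forall>p\<in>V'. fst p \<notin> S"
  shows "subgraph V' E' ((\<lambda>y. (y, 0)) ` VH) (image (\<lambda>y. (y, 0)) ` EH)"
proof -
  let ?\<iota> = "\<lambda>y. (y, 0::nat)"
  have s': "sgraph V' E'" and EE: "E' \<subseteq> blowup_edges VH EH S m"
    using sub unfolding subgraph_def by auto
  have V'sub: "V' \<subseteq> ?\<iota> ` VH"
  proof
    fix p assume "p \<in> V'"
    then have "p \<in> blowup_vertices VH S m" "fst p \<notin> S" using sub V'S unfolding subgraph_def by auto
    then show "p \<in> ?\<iota> ` VH" unfolding blowup_vertices_def by (cases p) auto
  qed
  have "E' \<subseteq> image ?\<iota> ` EH"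
  proof
    fix e' assume e': "e' \<in> E'"
    then obtain p q where pq: "e' = {p, q}" "{fst p, fst q} \<in> EH"
      using EE unfolding blowup_edges_def by auto
    have "e' \<subseteq> V'" using e' s' unfolding sgraph_def by auto
    then have "p = (fst p, 0)" "q = (fst q, 0)" using V'sub pq(1) by auto
    then have "e' = ?\<iota> ` {fst p, fst q}" using pq(1) by auto
    then show "e' \<in> image ?\<iota> ` EH" using pq(2) by blast
  qed
  with V'sub s' show ?thesis unfolding subgraph_def by blast
qed

lemma degenerate_blowup:
  assumes sH: "sgraph VH EH" and dH: "degenerate d VH EH"
    and ind: "\<forall>x\<in>S. \<forall>y\<in>S. {x, y} \<notin> EH" and deg: "\<forall>x\<in>S. degree EH x \<le> d"
  shows "degenerate d (blowup_vertices VH S m) (blowup_edges VH EH S m)"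
  unfolding degenerate_def
proof (intro allI impI, elim conjE)
  let ?E = "blowup_edges VH EH S m"
  have sB: "sgraph (blowup_vertices VH S m) ?E" by (rule sgraph_blowup[OF sH])
  fix V' E' assume sub: "subgraph V' E' (blowup_vertices VH S m) ?E" and ne: "V' \<noteq> {}"
  show "\<exists>v\<in>V'. degree E' v \<le> d"
  proof (cases "\<exists>p\<in>V'. fst p \<in> S")
    case True
    then obtain p where p: "p \<in> V'" "fst p \<in> S" by auto
    have "degree E' p \<le> degree ?E p"
      using sub sgraph_finite_edges[OF sB] unfolding subgraph_def by (intro degree_mono) auto
    also have "\<dots> \<le> card ((\<lambda>y. (y, 0::nat)) ` neighbours EH (fst p))"
      unfolding degree_eq_card_neighbours[OF sB]
      using neighbours_blowup_subset[OF ind p(2)] finite_neighbours[OF sH]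
      by (intro card_mono) auto
    also have "\<dots> \<le> degree EH (fst p)"
      unfolding degree_eq_card_neighbours[OF sH] by (rule card_image_le[OF finite_neighbours[OF sH]])
    also have "\<dots> \<le> d" using deg p(2) by blast
    finally show ?thesis using p(1) by blast
  next
    case False
    have "inj_on (\<lambda>y. (y, 0::nat)) VH" by (auto intro: inj_onI)
    with subgraph_blowup_layer_0[OF sub] False degenerate_image[OF _ sH dH] ne
    show ?thesis unfolding degenerate_def by blast
  qed
qed

lemma copy_in_blowup:
  assumes sH: "sgraph VH EH" and g: "\<forall>w\<in>VH. fst (g w) = w" "g ` VH \<subseteq> blowup_vertices VH S m"
  shows "subgraph (g ` VH) (image g ` EH) (blowup_vertices VH S m) (blowup_edges VH EH S m)"
    and "graph_iso VH EH (g ` VH) (image g ` EH)"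
proof -
  have inj: "inj_on g VH" using g(1) by (metis inj_onI)
  have "image g ` EH \<subseteq> blowup_edges VH EH S m"
  proof
    fix e assume "e \<in> image g ` EH"
    then obtain e0 where e0: "e0 \<in> EH" "e = g ` e0" by blast
    then obtain x y where "e0 = {x, y}" "x \<in> VH" "y \<in> VH" using sgraph_edgeE[OF sH] by metis
    with e0 g have "e = {g x, g y}" "g x \<in> blowup_vertices VH S m" "g y \<in> blowup_vertices VH S m"
        "{fst (g x), fst (g y)} \<in> EH"
      by auto
    then show "e \<in> blowup_edges VH EH S m" unfolding blowup_edges_def by blast
  qed
  with g(2) sgraph_image[OF inj sH]
  show "subgraph (g ` VH) (image g ` EH) (blowup_vertices VH S m) (blowup_edges VH EH S m)"
    unfolding subgraph_def by blast
  show "graph_iso VH EH (g ` VH) (image g ` EH)" by (rule graph_iso_image[OF inj sH])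
qed

lemma num_copies_blowup_ge:
  assumes sH: "sgraph VH EH" and SV: "S \<subseteq> VH"
  shows "m ^ card S \<le> num_copies VH EH (blowup_vertices VH S m) (blowup_edges VH EH S m)"
proof -
  let ?B = "blowup_vertices VH S m" and ?E = "blowup_edges VH EH S m"
  let ?C = "{(V', E'). subgraph V' E' ?B ?E \<and> graph_iso VH EH V' E'}"
  have sB: "sgraph ?B ?E" by (rule sgraph_blowup[OF sH])
  have fS: "finite S" using sH SV unfolding sgraph_def by (auto intro: finite_subset)
  \<comment> \<open>every choice of a layer for each vertex of S gives a distinct copy of H\<close>
  define G where "G = (\<lambda>\<sigma> w. (w, if w \<in> S then \<sigma> w else (0::nat)))"
  define F where "F = (\<lambda>\<sigma>. (G \<sigma> ` VH, image (G \<sigma>) ` EH))"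
  have "inj_on F (S \<rightarrow>\<^sub>E {..<m})"
  proof (rule inj_onI)
    fix \<sigma> \<tau> assume s: "\<sigma> \<in> S \<rightarrow>\<^sub>E {..<m}" "\<tau> \<in> S \<rightarrow>\<^sub>E {..<m}" "F \<sigma> = F \<tau>"
    then have eq: "G \<sigma> ` VH = G \<tau> ` VH" unfolding F_def by simp
    show "\<sigma> = \<tau>"
    proof (rule extensionalityI[of _ S])
      show "\<sigma> \<in> extensional S" "\<tau> \<in> extensional S" using s by (auto simp: PiE_def)
      fix x assume x: "x \<in> S"
      then have "G \<sigma> x \<in> G \<tau> ` VH" using eq SV by blast
      then show "\<sigma> x = \<tau> x" using x unfolding G_def by auto
    qed
  qed
  moreover have "F ` (S \<rightarrow>\<^sub>E {..<m}) \<subseteq> ?C"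
  proof
    fix z assume "z \<in> F ` (S \<rightarrow>\<^sub>E {..<m})"
    then obtain \<sigma> where \<sigma>: "\<sigma> \<in> S \<rightarrow>\<^sub>E {..<m}" "z = F \<sigma>" by auto
    have "\<forall>w\<in>VH. fst (G \<sigma> w) = w" unfolding G_def by simp
    moreover have "G \<sigma> ` VH \<subseteq> ?B" using \<sigma>(1) unfolding G_def blowup_vertices_def by auto
    ultimately show "z \<in> ?C" using copy_in_blowup[OF sH] \<sigma>(2) unfolding F_def by simp
  qed
  moreover have "finite ?C"
    using sB sgraph_finite_edges[OF sB] unfolding sgraph_def by (intro finite_copies) simp_all
  ultimately have "card (S \<rightarrow>\<^sub>E {..<m}) \<le> card ?C" by (rule card_inj_on_le)
  then show ?thesis unfolding num_copies_def using card_funcsetE[OF fS, of "{..<m}"] by simp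
qed

lemma card_blowup_vertices_le:
  assumes "finite VH" "1 \<le> m"
  shows "card (blowup_vertices VH S m) \<le> card VH * m"
proof -
  have "card (blowup_vertices VH S m) \<le> card (VH \<times> {..<max m 1})"
    using assms(1) blowup_vertices_subset by (intro card_mono) auto
  then show ?thesis using assms(2) by (simp add: card_cartesian_product max_def)
qed

lemma ex_degen_ge_power:
  assumes sH: "sgraph VH EH" and dH: "degenerate d VH EH" and m: "1 \<le> m" "card VH * m \<le> n"
  shows "m ^ alpha_d d VH EH \<le> ex_degen VH EH d n"
proof -
  have fVH: "finite VH" using sH unfolding sgraph_def by simp
  obtain S where S: "S \<subseteq> VH" "\<forall>x\<in>S. \<forall>y\<in>S. {x, y} \<notin> EH" "\<forall>x\<in>S. degree EH x \<le> d"
      "card S = alpha_d d VH EH"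
    using alpha_d_attained[OF fVH] by blast
  have "m ^ alpha_d d VH EH \<le> num_copies VH EH (blowup_vertices VH S m) (blowup_edges VH EH S m)"
    using num_copies_blowup_ge[OF sH S(1)] S(4) by simp
  also have "\<dots> \<le> ex_degen VH EH d n"
    using sgraph_blowup[OF sH] degenerate_blowup[OF sH dH S(2,3)]
      order_trans[OF card_blowup_vertices_le[OF fVH m(1)] m(2)]
    by (rule num_copies_le_ex_degen)
  finally show ?thesis .
qed

lemma le_two_mult_div:
  fixes k n :: nat
  assumes "0 < k" "k \<le> n"
  shows "n \<le> 2 * k * (n div k)"
proof -
  have "0 < n div k" using assms by (simp add: div_greater_zero_iff)
  then have "k * 1 \<le> k * (n div k)" by (intro mult_le_mono2) simp
  moreover have "n < k + k * (n div k)" using assms(1) by (rule dividend_less_times_div)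
  ultimately have "n \<le> k * (n div k) + k * (n div k)" by linarith
  then show ?thesis by (simp add: mult.assoc)
qed

lemma ex_degen_lower_bound:
  assumes sH: "sgraph VH EH" and dH: "degenerate d VH EH"
  shows "\<exists>c1>0. \<exists>N. \<forall>n\<ge>N. c1 * real n ^ alpha_d d VH EH \<le> real (ex_degen VH EH d n)"
proof -
  define k where "k = card VH + 1"
  define c1 :: real where "c1 = (1 / (2 * real k)) ^ alpha_d d VH EH"
  have "c1 * real n ^ alpha_d d VH EH \<le> real (ex_degen VH EH d n)" if n: "k \<le> n" for n
  proof -
    define m where "m = n div k"
    have "0 < m" using n unfolding m_def k_def by (simp add: div_greater_zero_iff)
    then have "1 \<le> m" by simp
    moreover have "card VH * m \<le> n"
      using div_times_less_eq_dividend[of n k] unfolding m_def k_def by (simp add: mult.commute)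
    ultimately have "m ^ alpha_d d VH EH \<le> ex_degen VH EH d n" by (rule ex_degen_ge_power[OF sH dH])
    then have ex: "real m ^ alpha_d d VH EH \<le> real (ex_degen VH EH d n)"
      by (metis of_nat_le_iff of_nat_power)
    have "n \<le> 2 * k * m" unfolding m_def using le_two_mult_div[OF _ n] by (simp add: k_def)
    then have "real n \<le> 2 * real k * real m" by (metis of_nat_le_iff of_nat_mult of_nat_numeral)
    then have "real n / (2 * real k) \<le> real m" unfolding k_def by (simp add: field_simps)
    have "c1 * real n ^ alpha_d d VH EH = (real n / (2 * real k)) ^ alpha_d d VH EH"
      unfolding c1_def by (simp add: power_divide)
    also have "\<dots> \<le> real m ^ alpha_d d VH EH"
      using \<open>real n / (2 * real k) \<le> real m\<close> by (intro power_mono) auto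
    finally show ?thesis using ex by linarith
  qed
  moreover have "c1 > 0" unfolding c1_def k_def by simp
  ultimately show ?thesis by blast
qed

theorem mainTheorem6:
  fixes d :: nat and VH :: "'b set" and EH :: "'b set set"
  assumes "sgraph VH EH"
  shows "(\<not> degenerate d VH EH \<longrightarrow> (\<forall>n. ex_degen VH EH d n = 0)) \<and>
         (degenerate d VH EH \<longrightarrow>
            (\<exists>c1 c2 :: real. c1 > 0 \<and> c2 > 0 \<and>
               (\<forall>n::nat. n \<ge> 1 \<longrightarrow> real (ex_degen VH EH d n) \<le> c2 * real n ^ alpha_d d VH EH) \<and>
               (\<exists>N. \<forall>n::nat. n \<ge> N \<longrightarrow> real (ex_degen VH EH d n) \<ge> c1 * real n ^ alpha_d d VH EH)))"
  using ex_degen_eq_0_if_not_degenerate[OF assms] ex_degen_upper_bound[OF assms, of d]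
    ex_degen_lower_bound[OF assms]
  by blast

end
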